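(* Fix $\lambda>0$ and an initial $\boldsymbol\alpha^{(0)}\in\mathbb R^{2nK}_{\ge0}$. Assume a solver is available that returns the optimal solution of the sub-problem $\max_{\boldsymbol\alpha\ge\mathbf0}D^{\mathcal F}_\lambda(\boldsymbol\alpha)$ (equivalently of $\min_{\mathbf m_{\mathcal F}\ge\mathbf0}P^{\mathcal F}_\lambda(\mathbf m_{\mathcal F})$) for any given $\mathcal F\subseteq[p]$. Consider the working set method: for $t=1,2,\dots$, set $\mathcal W_t=\{k\in[p]:\mathbf C_{k,:}\boldsymbol\alpha^{(t-1)}>\lambda\}$ and let $\boldsymbol\alpha^{(t)}$ be the optimal solution of the sub-problem with $\mathcal F=\mathcal W_t$. Then after finitely many steps this method returns the optimal solution of the original problem, i.e. there is a finite $T$ such that $\boldsymbol\alpha^{(T)}$ is the optimal solution of $\max_{\boldsymbol\alpha\ge\mathbf0}D_\lambda(\boldsymbol\alpha)$.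
   Context: Let $n,K,p\ge1$ be integers, $[n]=\{1,\dots,n\}$. For each $i\in[n]$ let $\mathbf x_i\in\mathbb R^p$ have nonnegative entries and let $\mathcal D_i,\mathcal S_i\subseteq[n]$ be sets of size $K$. Put $\mathbf c_{ij}=(\mathbf x_i-\mathbf x_j)\circ(\mathbf x_i-\mathbf x_j)$ (entrywise product). Vectors in $\mathbb R^{2nK}$ are indexed by the pairs $(i,l)$, $l\in\mathcal D_i$ ("different-class pairs") and $(i,j)$, $j\in\mathcal S_i$ ("same-class pairs"). $\mathbf C\in\mathbb R^{p\times2nK}$ has column $\mathbf c_{il}$ for each different-class pair and $-\mathbf c_{ij}$ for each same-class pair; $\mathbf C_{k,:}$ is its $k$-th row. Fix $L\ge U\ge0$, $\eta>0$; let $\mathbf t\in\mathbb R^{2nK}$ have entry $L$ at different-class pairs and $-U$ at same-class pairs; $\ell_s(x)=([s-x]_+)^2$ with $[z]_+=\max\{z,0\}$ (entrywise for vectors); $\mathbf1$ is the all-ones vector; for a vector $\mathbf v\in\mathbb R^p$ and $\mathcal F\subseteq[p]$, $\mathbf v_{\mathcal F}$ is the sub-vector of entries indexed by $\mathcal F$. The original primal and dual problems are $\min_{\mathbf m\in\mathbb R^p_{\ge0}}P_\lambda(\mathbf m)$ and $\max_{\boldsymbol\alpha\in\mathbb R^{2nK}_{\ge0}}D_\lambda(\boldsymbol\alpha)$, where $$P_\lambda(\mathbf m)=\sum_{i\in[n]}\Big[\sum_{l\in\mathcal D_i}\ell_L(\mathbf m^\top\mathbf c_{il})+\sum_{j\in\mathcal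 S_i}\ell_{-U}(-\mathbf m^\top\mathbf c_{ij})\Big]+\lambda\Big(\mathbf m^\top\mathbf1+\frac\eta2\|\mathbf m\|_2^2\Big),$$ $$D_\lambda(\boldsymbol\alpha)=-\frac14\|\boldsymbol\alpha\|_2^2+\mathbf t^\top\boldsymbol\alpha-\frac{\lambda\eta}2\|\mathbf m_\lambda(\boldsymbol\alpha)\|_2^2,\qquad\mathbf m_\lambda(\boldsymbol\alpha)=\frac1{\lambda\eta}[\mathbf C\boldsymbol\alpha-\lambda\mathbf1]_+.$$ For $\mathcal F\subseteq[p]$ the sub-problems fix $m_k=0$ for $k\notin\mathcal F$: $P^{\mathcal F}_\lambda(\mathbf m_{\mathcal F})$ is $P_\lambda$ with $\mathbf m$, $\mathbf c_{il}$, $\mathbf c_{ij}$ replaced by their sub-vectors indexed by $\mathcal F$ (minimized over $\mathbf m_{\mathcal F}\ge\mathbf0$), and $$D^{\mathcal F}_\lambda(\boldsymbol\alpha)=-\frac14\|\boldsymbol\alpha\|_2^2+\mathbf t^\top\boldsymbol\alpha-\frac{\lambda\eta}2\|\mathbf m_\lambda(\boldsymbol\alpha)_{\mathcal F}\|_2^2$$ (maximized over $\boldsymbol\alpha\ge\mathbf0$). *)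

theory Defs
  imports Complex_Main
begin

text \<open>Index set of \<open>\<real>^{2nK}\<close>: a pair is a triple (tag, i, j); tag True marks a
  different-class pair (i,l) with l in D i, tag False a same-class pair (i,j) with j in S i.
  Vectors in \<open>\<real>^{2nK}\<close> are functions on this index type, vanishing outside pair_idx.\<close>

definition pair_idx :: "nat \<Rightarrow> (nat \<Rightarrow> nat set) \<Rightarrow> (nat \<Rightarrow> nat set) \<Rightarrow> (bool \<times> nat \<times> nat) set" where
  "pair_idx n D S = {(True, i, l) | i l. i \<in> {1..n} \<and> l \<in> D i}
                  \<union> {(False, i, j) | i j. i \<in> {1..n} \<and> j \<in> S i}"

definition dual_feasible :: "(bool \<times> nat \<times> nat) set \<Rightarrow> ((bool \<times> nat \<times> nat) \<Rightarrow> real) set" where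
  "dual_feasible I = {\<alpha>. (\<forall>z\<in>I. \<alpha> z \<ge> 0) \<and> (\<forall>z. z \<notin> I \<longrightarrow> \<alpha> z = 0)}"

definition cvec :: "(nat \<Rightarrow> nat \<Rightarrow> real) \<Rightarrow> nat \<Rightarrow> nat \<Rightarrow> nat \<Rightarrow> real" where
  "cvec x i j k = (x i k - x j k)^2"

definition Cmat :: "(nat \<Rightarrow> nat \<Rightarrow> real) \<Rightarrow> nat \<Rightarrow> (bool \<times> nat \<times> nat) \<Rightarrow> real" where
  "Cmat x k z = (case z of (b, i, j) \<Rightarrow> if b then cvec x i j k else - cvec x i j k)"

definition Crow_mult :: "(nat \<Rightarrow> nat \<Rightarrow> real) \<Rightarrow> (bool \<times> nat \<times> nat) set \<Rightarrow> nat \<Rightarrow> ((bool \<times> nat \<times> nat) \<Rightarrow> real) \<Rightarrow> real" where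
  "Crow_mult x I k \<alpha> = (\<Sum>z\<in>I. Cmat x k z * \<alpha> z)"

definition tvec :: "real \<Rightarrow> real \<Rightarrow> (bool \<times> nat \<times> nat) \<Rightarrow> real" where
  "tvec L U z = (if fst z then L else - U)"

definition m_lam :: "(nat \<Rightarrow> nat \<Rightarrow> real) \<Rightarrow> (bool \<times> nat \<times> nat) set \<Rightarrow> real \<Rightarrow> real \<Rightarrow> ((bool \<times> nat \<times> nat) \<Rightarrow> real) \<Rightarrow> nat \<Rightarrow> real" where
  "m_lam x I lam eta \<alpha> k = max (Crow_mult x I k \<alpha> - lam) 0 / (lam * eta)"

definition dual_sub :: "(nat \<Rightarrow> nat \<Rightarrow> real) \<Rightarrow> (bool \<times> nat \<times> nat) set \<Rightarrow> real \<Rightarrow> real \<Rightarrow> real \<Rightarrow> real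
     \<Rightarrow> nat set \<Rightarrow> ((bool \<times> nat \<times> nat) \<Rightarrow> real) \<Rightarrow> real" where
  "dual_sub x I L U lam eta F \<alpha> =
     - (1/4) * (\<Sum>z\<in>I. (\<alpha> z)^2) + (\<Sum>z\<in>I. tvec L U z * \<alpha> z)
     - (lam * eta / 2) * (\<Sum>k\<in>F. (m_lam x I lam eta \<alpha> k)^2)"

definition dual_obj :: "(nat \<Rightarrow> nat \<Rightarrow> real) \<Rightarrow> (bool \<times> nat \<times> nat) set \<Rightarrow> nat \<Rightarrow> real \<Rightarrow> real \<Rightarrow> real \<Rightarrow> real
     \<Rightarrow> ((bool \<times> nat \<times> nat) \<Rightarrow> real) \<Rightarrow> real" where
  "dual_obj x I p L U lam eta \<alpha> =
     - (1/4) * (\<Sum>z\<in>I. (\<alpha> z)^2) + (\<Sum>z\<in>I. tvec L U z * \<alpha> z)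
     - (lam * eta / 2) * (\<Sum>k\<in>{1..p}. (m_lam x I lam eta \<alpha> k)^2)"

definition is_maximizer :: "('a \<Rightarrow> real) \<Rightarrow> 'a set \<Rightarrow> 'a \<Rightarrow> bool" where
  "is_maximizer f A a \<longleftrightarrow> a \<in> A \<and> (\<forall>b\<in>A. f b \<le> f a)"

definition working_set :: "(nat \<Rightarrow> nat \<Rightarrow> real) \<Rightarrow> (bool \<times> nat \<times> nat) set \<Rightarrow> nat \<Rightarrow> real
     \<Rightarrow> ((bool \<times> nat \<times> nat) \<Rightarrow> real) \<Rightarrow> nat set" where
  "working_set x I p lam \<alpha> = {k \<in> {1..p}. Crow_mult x I k \<alpha> > lam}"

end

theory Submission
  imports Defs
begin

text \<open>Let \<open>v\<^sub>t\<close> be the optimal value of the \<open>t\<close>-th sub-problem. With the primal-dual Lagrangian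
  \<open>L\<^sub>F(m, \<beta>)\<close>, whose minimum over \<open>m \<ge> 0\<close> is \<open>D\<^sup>F\<^sub>\<lambda>(\<beta>)\<close>, the optimality of \<open>\<alpha> = \<alpha>\<^sup>(\<^sup>t\<^sup>)\<close> for
  \<open>D\<^sup>F\<close> makes \<open>(m\<^sub>\<lambda>(\<alpha>), \<alpha>)\<close> a saddle point. Since \<open>m\<^sub>\<lambda>(\<alpha>)\<close> is supported in the next working set,
  \<open>v\<^sub>t\<^sub>+\<^sub>1 \<le> L\<^sub>F(m\<^sub>\<lambda>(\<alpha>), \<alpha>\<^sup>(\<^sup>t\<^sup>+\<^sup>1\<^sup>)) \<le> L\<^sub>F(m\<^sub>\<lambda>(\<alpha>), \<alpha>) = v\<^sub>t\<close>, and by strict concavity of \<open>L\<close> in \<open>\<beta>\<close>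
  equality forces \<open>\<alpha>\<^sup>(\<^sup>t\<^sup>+\<^sup>1\<^sup>) = \<alpha>\<close>, which is then optimal for the original dual. So as long as no
  iterate is optimal, \<open>v\<^sub>t\<close> decreases strictly; but \<open>v\<^sub>t\<close> depends only on the working set, of which
  there are finitely many.\<close>

lemma is_maximizer_value_eq:
  "is_maximizer f A a \<Longrightarrow> is_maximizer f A b \<Longrightarrow> f a = f b"
  by (auto simp: is_maximizer_def intro: order_antisym)

text \<open>For \<open>h(u) = [u]\<^sub>+\<^sup>2 / (2e)\<close>, with derivative \<open>h'(w) = [w]\<^sub>+ / e\<close>, the next three lemmas are the
  Fenchel-Young inequality, its equality case \<open>m = h'(w)\<close>, and the descent inequality of the
  \<open>1/e\<close>-smooth convex function \<open>h\<close>; they are phrased in the shape of the summands of \<open>D\<^sup>F\<^sub>\<lambda>\<close>.\<close>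

lemma pos_part_sq_fenchel:
  fixes e u m :: real
  assumes "e > 0" "m \<ge> 0"
  shows "m * u - (e/2) * m^2 \<le> (e/2) * (max u 0 / e)^2"
proof -
  have "m * u \<le> m * max u 0" using assms(2) by (simp add: mult_left_mono)
  moreover have "(e/2) * (max u 0 / e)^2 - m * max u 0 + (e/2) * m^2 = (e/2) * (max u 0 / e - m)^2"
    using assms(1) by (simp add: field_simps power2_eq_square)
  moreover have "0 \<le> (e/2) * (max u 0 / e - m)^2" using assms(1) by simp
  ultimately show ?thesis by linarith
qed

lemma pos_part_sq_tangent_eq:
  fixes e w :: real
  assumes "e > 0"
  shows "(e/2) * (max w 0 / e)^2 = (max w 0 / e) * w - (e/2) * (max w 0 / e)^2"
proof -
  have "max w 0 * max w 0 = max w 0 * w" by (simp add: max_def)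
  then show ?thesis using assms by (simp add: field_simps power2_eq_square)
qed

lemma pos_part_sq_smooth:
  fixes e u w :: real
  assumes "e > 0"
  shows "(e/2) * (max u 0 / e)^2
           \<le> (max w 0 / e) * u - (e/2) * (max w 0 / e)^2 + (u - w)^2 / (2*e)"
proof -
  let ?p = "max u 0" and ?q = "max w 0"
  have key: "?p^2 \<le> 2 * ?q * u - ?q^2 + (u - w)^2"
  proof (cases "w \<ge> 0")
    case True
    then show ?thesis by (simp add: max_def power2_eq_square algebra_simps)
  next
    case False
    then have "?p^2 \<le> (u - w)^2"
      by (cases "u \<ge> 0") (auto simp: max_def power2_eq_square intro!: mult_mono)
    then show ?thesis using False by simp
  qed
  have lhs: "(e/2) * (?p / e)^2 = ?p^2 / (2*e)"
    and rhs: "(?q / e) * u - (e/2) * (?q / e)^2 + (u - w)^2 / (2*e)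
                = (2 * ?q * u - ?q^2 + (u - w)^2) / (2*e)"
    using assms by (simp_all add: field_simps power2_eq_square)
  show ?thesis unfolding lhs rhs using key assms by (simp add: divide_right_mono)
qed

lemma m_lam_nonneg: "lam > 0 \<Longrightarrow> eta > 0 \<Longrightarrow> m_lam x I lam eta a k \<ge> 0"
  by (simp add: m_lam_def)

lemma m_lam_eq_0: "\<not> Crow_mult x I k a > lam \<Longrightarrow> m_lam x I lam eta a k = 0"
  by (simp add: m_lam_def)

text \<open>The Lagrangian \<open>L\<^sub>F(m, \<beta>)\<close> of the sub-problem pair \<open>P\<^sup>F\<^sub>\<lambda>\<close>, \<open>D\<^sup>F\<^sub>\<lambda>\<close>: its maximum over \<open>\<beta> \<ge> 0\<close> is
  \<open>P\<^sup>F\<^sub>\<lambda>(m)\<close>, and its minimum over \<open>m \<ge> 0\<close>, attained at \<open>m\<^sub>\<lambda>(\<beta>)\<close>, is \<open>D\<^sup>F\<^sub>\<lambda>(\<beta>)\<close>.\<close>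
definition lagrangian :: "(nat \<Rightarrow> nat \<Rightarrow> real) \<Rightarrow> (bool \<times> nat \<times> nat) set \<Rightarrow> real \<Rightarrow> real \<Rightarrow> real \<Rightarrow> real
     \<Rightarrow> nat set \<Rightarrow> (nat \<Rightarrow> real) \<Rightarrow> ((bool \<times> nat \<times> nat) \<Rightarrow> real) \<Rightarrow> real" where
  "lagrangian x I L U lam eta F m b =
     - (1/4) * (\<Sum>z\<in>I. (b z)^2) + (\<Sum>z\<in>I. tvec L U z * b z)
     - (\<Sum>k\<in>F. m k * (Crow_mult x I k b - lam))
     + (lam * eta / 2) * (\<Sum>k\<in>F. (m k)^2)"

lemma lagrangian_m_lam_self:
  assumes "lam > 0" "eta > 0"
  shows "lagrangian x I L U lam eta F (m_lam x I lam eta a) a = dual_sub x I L U lam eta F a"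
proof -
  have e: "lam * eta > 0" using assms by simp
  have "(\<Sum>k\<in>F. (lam*eta/2) * (m_lam x I lam eta a k)^2)
      = (\<Sum>k\<in>F. m_lam x I lam eta a k * (Crow_mult x I k a - lam) - (lam*eta/2) * (m_lam x I lam eta a k)^2)"
    unfolding m_lam_def using pos_part_sq_tangent_eq[OF e] by (intro sum.cong) auto
  then show ?thesis
    unfolding lagrangian_def dual_sub_def by (simp add: sum_subtractf sum_distrib_left)
qed

lemma dual_sub_le_lagrangian:
  assumes "lam > 0" "eta > 0" "\<forall>k\<in>F. m k \<ge> 0"
  shows "dual_sub x I L U lam eta F b \<le> lagrangian x I L U lam eta F m b"
proof -
  have e: "lam * eta > 0" using assms by simp
  have "(\<Sum>k\<in>F. m k * (Crow_mult x I k b - lam) - (lam*eta/2) * (m k)^2)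
      \<le> (\<Sum>k\<in>F. (lam*eta/2) * (m_lam x I lam eta b k)^2)"
    unfolding m_lam_def using pos_part_sq_fenchel[OF e] assms(3) by (intro sum_mono) auto
  then show ?thesis
    unfolding lagrangian_def dual_sub_def by (simp add: sum_subtractf sum_distrib_left)
qed

lemma lagrangian_restrict:
  assumes "finite F" "\<forall>k\<in>F - G. m k = 0"
  shows "lagrangian x I L U lam eta F m b = lagrangian x I L U lam eta (F \<inter> G) m b"
proof -
  have "(\<Sum>k\<in>F. f k) = (\<Sum>k\<in>F \<inter> G. f k)" if "\<And>k. m k = 0 \<Longrightarrow> f k = 0" for f :: "nat \<Rightarrow> real"
    using assms that by (intro sum.mono_neutral_right) auto
  from this[of "\<lambda>k. m k * (Crow_mult x I k b - lam)"] this[of "\<lambda>k. (m k)^2"]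
  show ?thesis unfolding lagrangian_def by simp
qed

lemma dual_sub_antimono:
  assumes "lam > 0" "eta > 0" "F \<subseteq> G" "finite G"
  shows "dual_sub x I L U lam eta G b \<le> dual_sub x I L U lam eta F b"
proof -
  have "(\<Sum>k\<in>F. (m_lam x I lam eta b k)^2) \<le> (\<Sum>k\<in>G. (m_lam x I lam eta b k)^2)"
    using assms(3,4) by (intro sum_mono2) auto
  then show ?thesis unfolding dual_sub_def using assms(1,2) by (simp add: mult_left_mono)
qed

lemma dual_sub_le_lagrangian_supported:
  assumes "lam > 0" "eta > 0" "finite F" "finite G"
    and "\<forall>k\<in>F. m k \<ge> 0" "\<forall>k\<in>F - G. m k = 0"
  shows "dual_sub x I L U lam eta G b \<le> lagrangian x I L U lam eta F m b"
proof -
  have "dual_sub x I L U lam eta G b \<le> dual_sub x I L U lam eta (F \<inter> G) b"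
    using assms(1,2,4) by (intro dual_sub_antimono) auto
  also have "\<dots> \<le> lagrangian x I L U lam eta (F \<inter> G) m b"
    using assms(1,2,5) by (intro dual_sub_le_lagrangian) auto
  also have "\<dots> = lagrangian x I L U lam eta F m b"
    using assms(3,6) by (rule lagrangian_restrict[symmetric])
  finally show ?thesis .
qed

definition convex_comb :: "('z \<Rightarrow> real) \<Rightarrow> ('z \<Rightarrow> real) \<Rightarrow> real \<Rightarrow> 'z \<Rightarrow> real" where
  "convex_comb a b s = (\<lambda>z. a z + s * (b z - a z))"

lemma convex_comb_dual_feasible:
  assumes "a \<in> dual_feasible I" "b \<in> dual_feasible I" "0 \<le> s" "s \<le> 1"
  shows "convex_comb a b s \<in> dual_feasible I"
proof -
  have "0 \<le> (1 - s) * a z + s * b z" if "z \<in> I" for z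
    using that assms by (simp add: dual_feasible_def)
  then show ?thesis using assms(1,2) by (auto simp: dual_feasible_def convex_comb_def algebra_simps)
qed

lemma Crow_mult_convex_comb:
  "Crow_mult x I k (convex_comb a b s) = Crow_mult x I k a + s * (Crow_mult x I k b - Crow_mult x I k a)"
  by (simp add: Crow_mult_def convex_comb_def algebra_simps sum.distrib sum_subtractf sum_distrib_left)

lemma lagrangian_convex_comb:
  "lagrangian x I L U lam eta F m (convex_comb b0 b1 s)
     = (1 - s) * lagrangian x I L U lam eta F m b0 + s * lagrangian x I L U lam eta F m b1
       + s * (1 - s) / 4 * (\<Sum>z\<in>I. (b1 z - b0 z)^2)"
proof -
  have sq: "(\<Sum>z\<in>I. (convex_comb b0 b1 s z)^2) = (1 - s) * (\<Sum>z\<in>I. (b0 z)^2)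
      + s * (\<Sum>z\<in>I. (b1 z)^2) - s * (1 - s) * (\<Sum>z\<in>I. (b1 z - b0 z)^2)"
  proof -
    have "(\<Sum>z\<in>I. (convex_comb b0 b1 s z)^2)
        = (\<Sum>z\<in>I. (1 - s) * (b0 z)^2 + s * (b1 z)^2 - s * (1 - s) * (b1 z - b0 z)^2)"
      by (intro sum.cong) (auto simp: convex_comb_def power2_eq_square algebra_simps)
    then show ?thesis by (simp add: sum.distrib sum_subtractf sum_distrib_left)
  qed
  have lin: "(\<Sum>z\<in>I. tvec L U z * convex_comb b0 b1 s z)
      = (1 - s) * (\<Sum>z\<in>I. tvec L U z * b0 z) + s * (\<Sum>z\<in>I. tvec L U z * b1 z)"
  proof -
    have "(\<Sum>z\<in>I. tvec L U z * convex_comb b0 b1 s z)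
        = (\<Sum>z\<in>I. (1 - s) * (tvec L U z * b0 z) + s * (tvec L U z * b1 z))"
      by (intro sum.cong) (auto simp: convex_comb_def algebra_simps)
    then show ?thesis by (simp add: sum.distrib sum_distrib_left)
  qed
  have pen: "(\<Sum>k\<in>F. m k * (Crow_mult x I k (convex_comb b0 b1 s) - lam))
      = (1 - s) * (\<Sum>k\<in>F. m k * (Crow_mult x I k b0 - lam)) + s * (\<Sum>k\<in>F. m k * (Crow_mult x I k b1 - lam))"
  proof -
    have "(\<Sum>k\<in>F. m k * (Crow_mult x I k (convex_comb b0 b1 s) - lam))
        = (\<Sum>k\<in>F. (1 - s) * (m k * (Crow_mult x I k b0 - lam)) + s * (m k * (Crow_mult x I k b1 - lam)))"
      by (intro sum.cong) (auto simp: Crow_mult_convex_comb algebra_simps)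
    then show ?thesis by (simp add: sum.distrib sum_distrib_left)
  qed
  show ?thesis unfolding lagrangian_def sq lin pen by (simp add: field_simps)
qed

lemma lagrangian_maximizer_unique:
  assumes "finite I"
    and "is_maximizer (lagrangian x I L U lam eta F m) (dual_feasible I) b0"
    and "is_maximizer (lagrangian x I L U lam eta F m) (dual_feasible I) b1"
  shows "b0 = b1"
proof -
  let ?L = "lagrangian x I L U lam eta F m"
  have feas: "b0 \<in> dual_feasible I" "b1 \<in> dual_feasible I"
    using assms(2,3) by (simp_all add: is_maximizer_def)
  have eq: "?L b0 = ?L b1" using assms(2,3) by (rule is_maximizer_value_eq)
  have "convex_comb b0 b1 (1/2) \<in> dual_feasible I" using feas by (intro convex_comb_dual_feasible) auto
  then have "?L (convex_comb b0 b1 (1/2)) \<le> ?L b0" using assms(2) by (simp add: is_maximizer_def)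
  then have "(\<Sum>z\<in>I. (b1 z - b0 z)^2) \<le> 0" unfolding lagrangian_convex_comb eq by simp
  then have "\<forall>z\<in>I. (b1 z - b0 z)^2 = 0"
    using assms(1) sum_nonneg_eq_0_iff[of I "\<lambda>z. (b1 z - b0 z)^2"]
    by (simp add: antisym sum_nonneg)
  moreover have "\<forall>z. z \<notin> I \<longrightarrow> b0 z = b1 z" using feas by (simp add: dual_feasible_def)
  ultimately show ?thesis by (intro ext) (metis power_eq_0_iff right_minus_eq)
qed

lemma lagrangian_m_lam_le_dual_sub:
  assumes "lam > 0" "eta > 0"
  shows "lagrangian x I L U lam eta F (m_lam x I lam eta a) c
           - (\<Sum>k\<in>F. (Crow_mult x I k c - Crow_mult x I k a)^2 / (2 * (lam * eta)))
         \<le> dual_sub x I L U lam eta F c"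
proof -
  have e: "lam * eta > 0" using assms by simp
  let ?ma = "m_lam x I lam eta a" and ?mc = "m_lam x I lam eta c"
  let ?gap = "\<lambda>k. (Crow_mult x I k c - Crow_mult x I k a)^2 / (2 * (lam * eta))"
  have "(\<Sum>k\<in>F. (lam*eta/2) * (?mc k)^2)
      \<le> (\<Sum>k\<in>F. ?ma k * (Crow_mult x I k c - lam) - (lam*eta/2) * (?ma k)^2 + ?gap k)"
    unfolding m_lam_def
    using pos_part_sq_smooth[OF e, of "Crow_mult x I k c - lam" "Crow_mult x I k a - lam" for k]
    by (intro sum_mono) simp
  also have "\<dots> = (\<Sum>k\<in>F. ?ma k * (Crow_mult x I k c - lam)) - (lam*eta/2) * (\<Sum>k\<in>F. (?ma k)^2)
                  + (\<Sum>k\<in>F. ?gap k)"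
    by (simp only: sum.distrib sum_subtractf sum_distrib_left)
  finally show ?thesis unfolding lagrangian_def dual_sub_def sum_distrib_left[symmetric] by linarith
qed

lemma dual_sub_maximizer_saddle_point:
  assumes "lam > 0" "eta > 0"
    and max: "is_maximizer (dual_sub x I L U lam eta F) (dual_feasible I) a"
  shows "is_maximizer (lagrangian x I L U lam eta F (m_lam x I lam eta a)) (dual_feasible I) a"
  unfolding is_maximizer_def
proof (intro conjI ballI)
  show a_feas: "a \<in> dual_feasible I" using max by (simp add: is_maximizer_def)
  let ?L = "lagrangian x I L U lam eta F (m_lam x I lam eta a)"
  let ?D = "dual_sub x I L U lam eta F"
  fix b assume b_feas: "b \<in> dual_feasible I"
  show "?L b \<le> ?L a"
  proof (rule ccontr)
    assume "\<not> ?L b \<le> ?L a"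
    define \<delta> where "\<delta> = ?L b - ?L a"
    have "\<delta> > 0" using \<open>\<not> ?L b \<le> ?L a\<close> by (simp add: \<delta>_def)
    define Q where "Q = (\<Sum>k\<in>F. (Crow_mult x I k b - Crow_mult x I k a)^2 / (2 * (lam * eta)))"
    have "Q \<ge> 0" unfolding Q_def using assms(1,2) by (intro sum_nonneg) simp
    txt \<open>A step of length \<open>s\<close> from \<open>a\<close> towards \<open>b\<close> raises \<open>D\<^sup>F\<close> by at least \<open>s \<delta> - s\<^sup>2 Q\<close>.\<close>
    define s where "s = \<delta> / (2 * Q + 2 * \<delta>)"
    have "s * Q = \<delta> * (Q / (2 * Q + 2 * \<delta>))" by (simp add: s_def)
    also have "\<dots> < \<delta> * 1"
      using \<open>\<delta> > 0\<close> \<open>Q \<ge> 0\<close> by (intro mult_strict_left_mono) auto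
    finally have s: "0 < s" "s \<le> 1" "s * Q < \<delta>"
      using \<open>\<delta> > 0\<close> \<open>Q \<ge> 0\<close> by (simp_all add: s_def)
    define c where "c = convex_comb a b s"
    have "c \<in> dual_feasible I" unfolding c_def using a_feas b_feas s by (intro convex_comb_dual_feasible) auto
    have gap: "(\<Sum>k\<in>F. (Crow_mult x I k c - Crow_mult x I k a)^2 / (2 * (lam * eta))) = s^2 * Q"
      unfolding Q_def c_def Crow_mult_convex_comb sum_distrib_left by (simp add: power_mult_distrib)
    have "?L c - s^2 * Q \<le> ?D c"
      using lagrangian_m_lam_le_dual_sub[OF assms(1,2), of x I L U F a c] unfolding gap .
    moreover have "?L a + s * \<delta> \<le> ?L c"
    proof -
      have "0 \<le> s * (1 - s) / 4 * (\<Sum>z\<in>I. (b z - a z)^2)" using s by (simp add: sum_nonneg)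
      then show ?thesis unfolding c_def lagrangian_convex_comb \<delta>_def by (simp add: algebra_simps)
    qed
    moreover have "?L a = ?D a" by (rule lagrangian_m_lam_self[OF assms(1,2)])
    moreover have "s * \<delta> - s^2 * Q > 0"
      using s by (simp add: power2_eq_square algebra_simps)
    ultimately have "?D c > ?D a" by linarith
    then show False using max \<open>c \<in> dual_feasible I\<close> by (auto simp: is_maximizer_def)
  qed
qed

lemma finite_pair_idx:
  assumes "\<forall>i\<in>{1..n}. finite (D i)" "\<forall>i\<in>{1..n}. finite (S i)"
  shows "finite (pair_idx n D S)"
proof -
  have "pair_idx n D S = (\<lambda>(i, l). (True, i, l)) ` Sigma {1..n} D \<union> (\<lambda>(i, j). (False, i, j)) ` Sigma {1..n} S"
    unfolding pair_idx_def by auto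
  then show ?thesis using assms by (auto intro!: finite_imageI)
qed

lemma dual_obj_eq_dual_sub: "dual_obj x I p L U lam eta = dual_sub x I L U lam eta {1..p}"
  by (simp add: fun_eq_iff dual_obj_def dual_sub_def)

lemma working_set_subset: "working_set x I p lam a \<subseteq> {1..p}"
  by (auto simp: working_set_def)

lemma dual_sub_working_set:
  "dual_sub x I L U lam eta (working_set x I p lam b) b = dual_sub x I L U lam eta {1..p} b"
proof -
  have "(\<Sum>k\<in>{1..p}. (m_lam x I lam eta b k)^2) = (\<Sum>k\<in>working_set x I p lam b. (m_lam x I lam eta b k)^2)"
    by (intro sum.mono_neutral_right) (auto simp: working_set_def m_lam_eq_0)
  then show ?thesis unfolding dual_sub_def by simp
qed

lemma working_set_fixpoint_optimal:
  assumes "lam > 0" "eta > 0"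
    and "is_maximizer (dual_sub x I L U lam eta (working_set x I p lam a)) (dual_feasible I) a"
  shows "is_maximizer (dual_obj x I p L U lam eta) (dual_feasible I) a"
  unfolding is_maximizer_def dual_obj_eq_dual_sub
proof (intro conjI ballI)
  show "a \<in> dual_feasible I" using assms(3) by (simp add: is_maximizer_def)
  fix b assume "b \<in> dual_feasible I"
  have "dual_sub x I L U lam eta {1..p} b \<le> dual_sub x I L U lam eta (working_set x I p lam a) b"
    using assms(1,2) working_set_subset by (intro dual_sub_antimono) auto
  also have "\<dots> \<le> dual_sub x I L U lam eta (working_set x I p lam a) a"
    using assms(3) \<open>b \<in> dual_feasible I\<close> by (simp add: is_maximizer_def)
  finally show "dual_sub x I L U lam eta {1..p} b \<le> dual_sub x I L U lam eta {1..p} a"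
    by (simp only: dual_sub_working_set)
qed

lemma working_set_step_decreases:
  assumes "lam > 0" "eta > 0" "finite I" "F \<subseteq> {1..p}"
    and max_a: "is_maximizer (dual_sub x I L U lam eta F) (dual_feasible I) a"
    and max_b: "is_maximizer (dual_sub x I L U lam eta (working_set x I p lam a)) (dual_feasible I) b"
    and not_opt: "\<not> is_maximizer (dual_obj x I p L U lam eta) (dual_feasible I) a"
  shows "dual_sub x I L U lam eta (working_set x I p lam a) b < dual_sub x I L U lam eta F a"
proof -
  let ?W = "working_set x I p lam a" and ?m = "m_lam x I lam eta a"
  let ?L = "lagrangian x I L U lam eta F ?m"
  have saddle: "is_maximizer ?L (dual_feasible I) a"
    using assms(1,2) max_a by (rule dual_sub_maximizer_saddle_point)
  have "finite F" "finite ?W"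
    using assms(4) working_set_subset by (metis finite_atLeastAtMost finite_subset)+
  moreover have "\<forall>k\<in>F - ?W. ?m k = 0"
    using assms(4) by (auto simp: working_set_def intro: m_lam_eq_0)
  ultimately have "dual_sub x I L U lam eta ?W b \<le> ?L b"
    using assms(1,2) m_lam_nonneg by (intro dual_sub_le_lagrangian_supported) auto
  moreover have "?L b \<le> ?L a" using saddle max_b by (simp add: is_maximizer_def)
  moreover have "?L b \<noteq> ?L a"
  proof
    assume "?L b = ?L a"
    then have "is_maximizer ?L (dual_feasible I) b" using saddle max_b by (simp add: is_maximizer_def)
    then have "b = a" using lagrangian_maximizer_unique[OF assms(3) _ saddle] by blast
    then show False using working_set_fixpoint_optimal[OF assms(1,2)] max_b not_opt by blast
  qed
  moreover have "?L a = dual_sub x I L U lam eta F a" using assms(1,2) by (rule lagrangian_m_lam_self)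
  ultimately show ?thesis by linarith
qed

lemma finite_range_not_strictly_decreasing:
  fixes v :: "nat \<Rightarrow> real"
  assumes "finite (range W)" "\<And>s t. W s = W t \<Longrightarrow> v s = v t"
  shows "\<not> (\<forall>t. v (Suc t) < v t)"
proof
  assume "\<forall>t. v (Suc t) < v t"
  then have "strict_mono (\<lambda>t. - v t)" by (simp add: strict_mono_Suc_iff)
  then have "inj W" using assms(2) by (intro injI) (metis strict_mono_eq)
  then show False using assms(1) finite_imageD infinite_UNIV_nat by blast
qed

theorem theorem9:
  fixes n K p :: nat
    and x :: "nat \<Rightarrow> nat \<Rightarrow> real"
    and D S :: "nat \<Rightarrow> nat set"
    and L U eta lam :: real
    and \<alpha> :: "nat \<Rightarrow> (bool \<times> nat \<times> nat) \<Rightarrow> real"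
  assumes "n \<ge> 1" and "K \<ge> 1" and "p \<ge> 1"
    and "\<forall>i\<in>{1..n}. \<forall>k\<in>{1..p}. x i k \<ge> 0"
    and "\<forall>i\<in>{1..n}. D i \<subseteq> {1..n} \<and> card (D i) = K"
    and "\<forall>i\<in>{1..n}. S i \<subseteq> {1..n} \<and> card (S i) = K"
    and "L \<ge> U" and "U \<ge> 0" and "eta > 0" and "lam > 0"
    and "\<alpha> 0 \<in> dual_feasible (pair_idx n D S)"
    and "\<forall>t. is_maximizer
               (dual_sub x (pair_idx n D S) L U lam eta
                  (working_set x (pair_idx n D S) p lam (\<alpha> t)))
               (dual_feasible (pair_idx n D S)) (\<alpha> (Suc t))"
  shows "\<exists>T. is_maximizer (dual_obj x (pair_idx n D S) p L U lam eta)
                         (dual_feasible (pair_idx n D S)) (\<alpha> T)"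
proof (rule ccontr)
  txt \<open>Only finiteness of the index set and \<open>\<lambda>, \<eta> > 0\<close> are used.\<close>
  assume not_opt: "\<not> ?thesis"
  define I where "I = pair_idx n D S"
  define W where "W t = working_set x I p lam (\<alpha> t)" for t
  define v where "v t = dual_sub x I L U lam eta (W t) (\<alpha> (Suc t))" for t
  have max: "is_maximizer (dual_sub x I L U lam eta (W t)) (dual_feasible I) (\<alpha> (Suc t))" for t
    using assms(12) by (simp add: I_def W_def)
  have "finite I"
    unfolding I_def using assms(5,6)
    by (intro finite_pair_idx) (meson finite_atLeastAtMost finite_subset)+
  have W_subset: "W t \<subseteq> {1..p}" for t unfolding W_def by (rule working_set_subset)
  have not_opt_I: "\<not> is_maximizer (dual_obj x I p L U lam eta) (dual_feasible I) (\<alpha> t)" for t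
    using not_opt by (auto simp: I_def)
  have "range W \<subseteq> Pow {1..p}" using W_subset by blast
  then have "finite (range W)" by (rule finite_subset) simp
  moreover have "v s = v t" if "W s = W t" for s t
    using is_maximizer_value_eq[OF max[of s, unfolded that] max[of t]] that by (simp add: v_def)
  moreover have "v (Suc t) < v t" for t
    using working_set_step_decreases[OF assms(10,9) \<open>finite I\<close> W_subset max
        max[of "Suc t", unfolded W_def] not_opt_I]
    by (simp only: v_def W_def)
  ultimately show False by (metis finite_range_not_strictly_decreasing)
qed

end
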